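(* Let $\beta_{\mathtt{H}},\beta_{\mathtt{L}},\gamma_{\mathtt{H}},\gamma_{\mathtt{L}}>0$ with $\beta_{\mathtt{H}}/\gamma_{\mathtt{H}}>\beta_{\mathtt{L}}/\gamma_{\mathtt{L}}$ and $\beta_{\mathtt{H}}>\beta_{\mathtt{L}}$, let $q_{\mathtt{HL}},q_{\mathtt{LH}}\ge 0$, $\alpha\in(0,1)$, and for $z_{\mathtt{S}}\in[0,1]$ set $\hat\beta_{\mathtt{Q}}(z_{\mathtt{S}}):=\beta_{\mathtt{Q}}(\alpha z_{\mathtt{S}}+1-z_{\mathtt{S}})$ for $\mathtt{Q}\in\{\mathtt{H},\mathtt{L}\}$. Suppose that for each $z_{\mathtt{S}}\in[0,1]$ the system \begin{align*} \dot{\mathtt{I}}_{\mathtt{H}}&=\hat\beta_{\mathtt{H}}(z_{\mathtt{S}})\mathtt{I}_{\mathtt{H}}(1-\mathtt{I}_{\mathtt{H}}-\mathtt{I}_{\mathtt{L}})+q_{\mathtt{LH}}\mathtt{I}_{\mathtt{L}}-(q_{\mathtt{HL}}+\gamma_{\mathtt{H}})\mathtt{I}_{\mathtt{H}},\\ \dot{\mathtt{I}}_{\mathtt{L}}&=\hat\beta_{\mathtt{L}}(z_{\mathtt{S}})\mathtt{I}_{\mathtt{L}}(1-\mathtt{I}_{\mathtt{H}}-\mathtt{I}_{\mathtt{L}})+q_{\mathtt{HL}}\mathtt{I}_{\mathtt{H}}-(q_{\mathtt{LH}}+\gamma_{\mathtt{L}})\mathtt{I}_{\mathtt{L}} \end{align*}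 has an endemic equilibrium $(\mathtt{I}^\star_{\mathtt{H}}(z_{\mathtt{S}}),\mathtt{I}^\star_{\mathtt{L}}(z_{\mathtt{S}}))\in(0,1)^2$. Then $\mathtt{I}^\star_{\mathtt{H}}(z_{\mathtt{S}})$ and $\mathtt{I}^\star_{\mathtt{L}}(z_{\mathtt{S}})$ are monotonically decreasing in $z_{\mathtt{S}}$.
   Context: Bi-virus SIS model with strains $\mathtt{H},\mathtt{L}$: $\mathtt{I}_{\mathtt{H}},\mathtt{I}_{\mathtt{L}}$ are infected fractions, $\beta$'s transmission rates, $\gamma$'s recovery rates, $q_{\mathtt{HL}},q_{\mathtt{LH}}$ mutation rates, $z_{\mathtt{S}}$ fraction of susceptibles adopting protection, protection scaling infection rates by $\alpha$. *)

theory Defs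
  imports Complex_Main
begin

definition beta_hat :: "real \<Rightarrow> real \<Rightarrow> real \<Rightarrow> real" where
  "beta_hat \<alpha> \<beta> zS = \<beta> * (\<alpha> * zS + 1 - zS)"

definition fH :: "real \<Rightarrow> real \<Rightarrow> real \<Rightarrow> real \<Rightarrow> real \<Rightarrow> real \<Rightarrow> real \<Rightarrow> real \<Rightarrow> real" where
  "fH \<alpha> \<beta>H \<gamma>H qHL qLH zS IH IL =
     beta_hat \<alpha> \<beta>H zS * IH * (1 - IH - IL) + qLH * IL - (qHL + \<gamma>H) * IH"

definition fL :: "real \<Rightarrow> real \<Rightarrow> real \<Rightarrow> real \<Rightarrow> real \<Rightarrow> real \<Rightarrow> real \<Rightarrow> real \<Rightarrow> real" where
  "fL \<alpha> \<beta>L \<gamma>L qHL qLH zS IH IL =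
     beta_hat \<alpha> \<beta>L zS * IL * (1 - IH - IL) + qHL * IH - (qLH + \<gamma>L) * IL"

definition endemic_eq :: "real \<Rightarrow> real \<Rightarrow> real \<Rightarrow> real \<Rightarrow> real \<Rightarrow> real \<Rightarrow> real \<Rightarrow> real \<Rightarrow> real \<Rightarrow> real \<Rightarrow> bool" where
  "endemic_eq \<alpha> \<beta>H \<beta>L \<gamma>H \<gamma>L qHL qLH zS IH IL \<longleftrightarrow>
     IH \<in> {0<..<1} \<and> IL \<in> {0<..<1} \<and>
     fH \<alpha> \<beta>H \<gamma>H qHL qLH zS IH IL = 0 \<and>
     fL \<alpha> \<beta>L \<gamma>L qHL qLH zS IH IL = 0"

end

theory Submission
  imports Defs
begin

text \<open>
  Write \<open>s = (\<alpha> zS + 1 - zS) (1 - IH - IL)\<close> for the effective susceptible level. The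
  equilibrium equations say that \<open>(IH, IL)\<close> is a positive null vector of the matrix
  \<open>[[\<beta>H s - qHL - \<gamma>H, qLH], [qHL, \<beta>L s - qLH - \<gamma>L]]\<close>, whose off-diagonal entries are
  nonnegative. So both diagonal entries are nonpositive and the determinant vanishes; in that range
  the determinant is strictly decreasing in \<open>s\<close>, hence \<open>s\<close> is the same for every \<open>zS\<close>, and so are
  the matrix and the direction of \<open>(IH, IL)\<close>. Since \<open>1 - IH - IL = s / (\<alpha> zS + 1 - zS)\<close> grows
  with \<open>zS\<close>, the total \<open>IH + IL\<close> falls, and with a fixed direction each component falls.
\<close>

lemma null_vector_2x2_pos:
  fixes a b p q x y :: real
  assumes "a * x + p * y = 0" "q * x + b * y = 0"
    and "x > 0" "y > 0" "p \<ge> 0" "q \<ge> 0"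
  shows "a \<le> 0" "b \<le> 0" "a * b = p * q"
proof -
  have ax: "a * x = - (p * y)" and "b * y = - (q * x)"
    using assms(1,2) by (simp_all add: eq_neg_iff_add_eq_0)
  then have "a * x \<le> 0" "b * y \<le> 0"
    using assms(3-6) by simp_all
  then show "a \<le> 0" "b \<le> 0"
    using assms(3,4) by (simp_all add: mult_le_0_iff)
  have "(a * b) * (x * y) = (a * x) * (b * y)"
    by (simp add: algebra_simps)
  also have "\<dots> = (p * q) * (x * y)"
    using ax \<open>b * y = - (q * x)\<close> by (simp add: algebra_simps)
  finally show "a * b = p * q"
    using assms(3,4) by simp
qed

lemma null_vectors_2x2_parallel:
  fixes a b p q x1 y1 x2 y2 :: "'a::idom"
  assumes "a * x1 + p * y1 = 0" "q * x1 + b * y1 = 0"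
    and "a * x2 + p * y2 = 0" "q * x2 + b * y2 = 0"
    and "a \<noteq> 0 \<or> b \<noteq> 0 \<or> p \<noteq> 0 \<or> q \<noteq> 0"
  shows "x1 * y2 = x2 * y1"
proof -
  define D where "D = x1 * y2 - x2 * y1"
  have "a * D = y2 * (a * x1 + p * y1) - y1 * (a * x2 + p * y2)"
    "p * D = x1 * (a * x2 + p * y2) - x2 * (a * x1 + p * y1)"
    "q * D = y2 * (q * x1 + b * y1) - y1 * (q * x2 + b * y2)"
    "b * D = x1 * (q * x2 + b * y2) - x2 * (q * x1 + b * y1)"
    unfolding D_def by (simp_all add: algebra_simps)
  then have "a * D = 0" "b * D = 0" "p * D = 0" "q * D = 0"
    using assms(1-4) by simp_all
  then show ?thesis
    using assms(5) unfolding D_def by auto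
qed

lemma mult_nonpos_strict_antimono:
  fixes a1 a2 b1 b2 :: "'a::linordered_ring_strict"
  assumes "a1 < a2" "a2 \<le> 0" "b1 < b2" "b2 \<le> 0"
  shows "a2 * b2 < a1 * b1"
proof -
  have "a2 * b2 \<le> a2 * b1"
    using assms by (simp add: mult_left_mono_neg)
  also have "\<dots> < a1 * b1"
    using assms by (simp add: mult_strict_right_mono_neg)
  finally show ?thesis .
qed

lemma strict_mono_nonpos_product_inj:
  fixes f g :: "real \<Rightarrow> real"
  assumes "strict_mono f" "strict_mono g"
    and "f x \<le> 0" "g x \<le> 0" "f y \<le> 0" "g y \<le> 0"
    and "f x * g x = f y * g y"
  shows "x = y"
proof (cases x y rule: linorder_cases)
  case less
  then have "f y * g y < f x * g x"
    using assms by (intro mult_nonpos_strict_antimono) (auto dest: strict_monoD)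
  with assms(7) show ?thesis by simp
next
  case greater
  then have "f x * g x < f y * g y"
    using assms by (intro mult_nonpos_strict_antimono) (auto dest: strict_monoD)
  with assms(7) show ?thesis by simp
qed

lemma parallel_pos_vectors_le:
  fixes x1 y1 x2 y2 :: "'a::linordered_idom"
  assumes "x1 * y2 = x2 * y1"
    and "x1 > 0" "y1 > 0" "x2 > 0" "y2 > 0"
    and "x2 + y2 \<le> x1 + y1"
  shows "x2 \<le> x1 \<and> y2 \<le> y1"
proof (rule ccontr)
  assume "\<not> (x2 \<le> x1 \<and> y2 \<le> y1)"
  then consider "x1 < x2" | "y1 < y2" by fastforce
  then show False
  proof cases
    case 1
    then have "x2 * y1 < x2 * y2"
      using assms(1,5) by (metis mult.commute mult_strict_right_mono)
    then have "y1 < y2"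
      using assms(4) by simp
    with 1 assms(6) show False by simp
  next
    case 2
    then have "x1 * y1 < x2 * y1"
      using assms(1,2) by (metis mult_strict_left_mono)
    then have "x1 < x2"
      using assms(3) by simp
    with 2 assms(6) show False by simp
  qed
qed

definition protection_factor :: "real \<Rightarrow> real \<Rightarrow> real" where
  "protection_factor \<alpha> zS = \<alpha> * zS + 1 - zS"

definition susceptible_level :: "real \<Rightarrow> real \<Rightarrow> real \<Rightarrow> real \<Rightarrow> real" where
  "susceptible_level \<alpha> zS IH IL = protection_factor \<alpha> zS * (1 - IH - IL)"

lemma protection_factor_pos:
  assumes "0 < \<alpha>" "zS \<in> {0..1}"
  shows "protection_factor \<alpha> zS > 0"
proof -
  have "(1 - \<alpha>) * zS < 1"
  proof (cases "\<alpha> \<le> 1")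
    case True
    then have "(1 - \<alpha>) * zS \<le> 1 - \<alpha>"
      using assms(2) by (simp add: mult_left_le)
    with assms(1) show ?thesis by simp
  next
    case False
    then have "(1 - \<alpha>) * zS \<le> 0"
      using assms(2) by (simp add: mult_nonpos_nonneg)
    then show ?thesis by simp
  qed
  then show ?thesis
    unfolding protection_factor_def by (simp add: algebra_simps)
qed

lemma protection_factor_antimono:
  assumes "\<alpha> \<le> 1"
  shows "antimono (protection_factor \<alpha>)"
proof (rule antimonoI)
  fix x y :: real
  assume "x \<le> y"
  then have "(y - x) * \<alpha> \<le> y - x"
    using assms by (simp add: mult_left_le)
  then show "protection_factor \<alpha> y \<le> protection_factor \<alpha> x"
    unfolding protection_factor_def by (simp add: algebra_simps)
qed

lemma fH_eq_linear:
  "fH \<alpha> \<beta>H \<gamma>H qHL qLH zS IH IL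
     = (\<beta>H * susceptible_level \<alpha> zS IH IL - qHL - \<gamma>H) * IH + qLH * IL"
  unfolding fH_def beta_hat_def susceptible_level_def protection_factor_def
  by (simp add: algebra_simps)

lemma fL_eq_linear:
  "fL \<alpha> \<beta>L \<gamma>L qHL qLH zS IH IL
     = qHL * IH + (\<beta>L * susceptible_level \<alpha> zS IH IL - qLH - \<gamma>L) * IL"
  unfolding fL_def beta_hat_def susceptible_level_def protection_factor_def
  by (simp add: algebra_simps)

locale bivirus_sis =
  fixes \<alpha> \<beta>H \<beta>L \<gamma>H \<gamma>L qHL qLH :: real
  assumes \<beta>H_pos: "\<beta>H > 0" and \<beta>L_pos: "\<beta>L > 0"
    and \<gamma>H_pos: "\<gamma>H > 0" and \<gamma>L_pos: "\<gamma>L > 0"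
    and qHL_nonneg: "qHL \<ge> 0" and qLH_nonneg: "qLH \<ge> 0"
begin

abbreviation endemic :: "real \<Rightarrow> real \<Rightarrow> real \<Rightarrow> bool" where
  "endemic \<equiv> endemic_eq \<alpha> \<beta>H \<beta>L \<gamma>H \<gamma>L qHL qLH"

abbreviation diagH :: "real \<Rightarrow> real" where
  "diagH s \<equiv> \<beta>H * s - qHL - \<gamma>H"

abbreviation diagL :: "real \<Rightarrow> real" where
  "diagL s \<equiv> \<beta>L * s - qLH - \<gamma>L"

lemma endemic_null_vector:
  assumes "endemic zS IH IL"
  defines "s \<equiv> susceptible_level \<alpha> zS IH IL"
  shows "diagH s * IH + qLH * IL = 0" "qHL * IH + diagL s * IL = 0"
    and "IH > 0" "IL > 0"
  using assms fH_eq_linear fL_eq_linear unfolding endemic_eq_def by auto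

lemma endemic_susceptible_level_pos:
  assumes "endemic zS IH IL"
  shows "susceptible_level \<alpha> zS IH IL > 0"
proof -
  let ?s = "susceptible_level \<alpha> zS IH IL"
  note eqs = endemic_null_vector[OF assms]
  have "?s * (\<beta>H * IH + \<beta>L * IL) = \<gamma>H * IH + \<gamma>L * IL"
    using arg_cong2[OF eqs(1,2), of "(+)"] by (simp add: algebra_simps)
  moreover have "\<gamma>H * IH + \<gamma>L * IL > 0" "\<beta>H * IH + \<beta>L * IL > 0"
    using eqs(3,4) \<beta>H_pos \<beta>L_pos \<gamma>H_pos \<gamma>L_pos by (simp_all add: add_pos_pos)
  ultimately show ?thesis
    by (metis zero_less_mult_pos2)
qed

lemma endemic_diag_nonpos_det_zero:
  assumes "endemic zS IH IL"
  defines "s \<equiv> susceptible_level \<alpha> zS IH IL"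
  shows "diagH s \<le> 0" "diagL s \<le> 0" "diagH s * diagL s = qLH * qHL"
  using null_vector_2x2_pos[OF endemic_null_vector[OF assms(1)] qLH_nonneg qHL_nonneg]
  unfolding s_def by simp_all

lemma endemic_susceptible_level_unique:
  assumes "endemic zS IH IL" "endemic zS' IH' IL'"
  shows "susceptible_level \<alpha> zS IH IL = susceptible_level \<alpha> zS' IH' IL'"
proof (rule strict_mono_nonpos_product_inj)
  show "strict_mono diagH" "strict_mono diagL"
    using \<beta>H_pos \<beta>L_pos by (auto intro: strict_monoI)
qed (use endemic_diag_nonpos_det_zero[OF assms(1)] endemic_diag_nonpos_det_zero[OF assms(2)] in auto)

lemma endemic_parallel:
  assumes "\<beta>L / \<gamma>L < \<beta>H / \<gamma>H"
    and "endemic zS IH IL" "endemic zS' IH' IL'"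
  shows "IH * IL' = IH' * IL"
proof -
  define s where "s = susceptible_level \<alpha> zS IH IL"
  have s': "susceptible_level \<alpha> zS' IH' IL' = s"
    using endemic_susceptible_level_unique[OF assms(3,2)] unfolding s_def .
  have "diagH s \<noteq> 0 \<or> diagL s \<noteq> 0 \<or> qLH \<noteq> 0 \<or> qHL \<noteq> 0"
  proof (rule ccontr)
    assume "\<not> ?thesis"
    then have "\<beta>H * s = \<gamma>H" "\<beta>L * s = \<gamma>L"
      by simp_all
    then have "\<beta>H / \<gamma>H = \<beta>L / \<gamma>L"
      using \<gamma>H_pos \<gamma>L_pos by (auto simp: field_simps)
    with assms(1) show False by simp
  qed
  then show ?thesis
    using null_vectors_2x2_parallel endemic_null_vector[OF assms(2)]
      endemic_null_vector[OF assms(3)] unfolding s_def s' by blast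
qed

lemma endemic_total_antimono:
  assumes "0 < \<alpha>" "\<alpha> \<le> 1"
    and "endemic zS IH IL" "endemic zS' IH' IL'"
    and "zS \<in> {0..1}" "zS' \<in> {0..1}" "zS \<le> zS'"
  shows "IH' + IL' \<le> IH + IL"
proof -
  define s where "s = susceptible_level \<alpha> zS IH IL"
  have s': "susceptible_level \<alpha> zS' IH' IL' = s"
    using endemic_susceptible_level_unique[OF assms(4,3)] unfolding s_def .
  have c: "protection_factor \<alpha> zS > 0" "protection_factor \<alpha> zS' > 0"
    using protection_factor_pos assms(1,5,6) by auto
  have "1 - IH - IL = s / protection_factor \<alpha> zS"
    using c(1) unfolding s_def susceptible_level_def by simp
  also have "\<dots> \<le> s / protection_factor \<alpha> zS'"
    using c protection_factor_antimono[of \<alpha>] assms(2,7) endemic_susceptible_level_pos[OF assms(3)]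
    unfolding s_def by (intro divide_left_mono) (auto dest: antimonoD)
  also have "\<dots> = 1 - IH' - IL'"
    using c(2) unfolding s'[symmetric] susceptible_level_def by simp
  finally show ?thesis by simp
qed

end

theorem lemma3:
  fixes \<beta>H \<beta>L \<gamma>H \<gamma>L qHL qLH \<alpha> :: real
    and IHs ILs :: "real \<Rightarrow> real"
  assumes "\<beta>H > 0" "\<beta>L > 0" "\<gamma>H > 0" "\<gamma>L > 0"
    and "\<beta>H / \<gamma>H > \<beta>L / \<gamma>L" and "\<beta>H > \<beta>L"
    and "qHL \<ge> 0" "qLH \<ge> 0"
    and "0 < \<alpha>" "\<alpha> < 1"
    and "\<forall>zS \<in> {0..1}. endemic_eq \<alpha> \<beta>H \<beta>L \<gamma>H \<gamma>L qHL qLH zS (IHs zS) (ILs zS)"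
  shows "antimono_on {0..1} IHs \<and> antimono_on {0..1} ILs"
proof -
  interpret bivirus_sis \<alpha> \<beta>H \<beta>L \<gamma>H \<gamma>L qHL qLH
    using assms(1-4,7,8) by unfold_locales
  have "IHs w \<le> IHs z \<and> ILs w \<le> ILs z"
    if zw: "z \<in> {0..1}" "w \<in> {0..1}" "z \<le> w" for z w
  proof (rule parallel_pos_vectors_le)
    have eqs: "endemic z (IHs z) (ILs z)" "endemic w (IHs w) (ILs w)"
      using assms(11) zw(1,2) by auto
    show "IHs z * ILs w = IHs w * ILs z"
      using endemic_parallel[OF assms(5) eqs] .
    show "IHs w + ILs w \<le> IHs z + ILs z"
      using endemic_total_antimono[OF assms(9) less_imp_le[OF assms(10)] eqs zw] .
    show "IHs z > 0" "ILs z > 0" "IHs w > 0" "ILs w > 0"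
      using endemic_null_vector(3,4)[OF eqs(1)] endemic_null_vector(3,4)[OF eqs(2)] by auto
  qed
  then show ?thesis
    by (auto intro!: monotone_onI)
qed

end
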